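(* For every $n\geq 1$, the number of Grand-Dyck paths of semilength $n$ starting with an up step and avoiding the pattern $DUD$ equals the coefficient of $z^n$ in $\frac{1-3z-\sqrt{1-2z-3z^2}}{6z-2}$, i.e. the $n$-th term of OEIS sequence A005773 ($1,1,2,5,13,35,96,\dots$ indexed from $n=0$).
   Context: A Grand-Dyck path of semilength $n$ starting with an up step is a word with exactly $n$ letters $U$ and $n$ letters $D$ whose first letter is $U$. It avoids the pattern $DUD$ if it has no three consecutive letters equal to $D,U,D$. *)

theory Defs
  imports "HOL-Computational_Algebra.Formal_Power_Series" Complex_Main
begin

datatype step = U | D

definition avoids_DUD :: "step list \<Rightarrow> bool" where
  "avoids_DUD w \<longleftrightarrow>
     \<not> (\<exists>i. i + 2 < length w \<and> w ! i = D \<and> w ! (i + 1) = U \<and> w ! (i + 2) = D)"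

definition grand_dyck_U_DUD :: "nat \<Rightarrow> step list set" where
  "grand_dyck_U_DUD n =
     {w. length (filter (\<lambda>s. s = U) w) = n \<and> length (filter (\<lambda>s. s = D) w) = n
         \<and> w \<noteq> [] \<and> hd w = U \<and> avoids_DUD w}"

definition sqrt_series :: "real fps" where
  "sqrt_series = fps_radical (\<lambda>k x. root k x) 2 (1 - 2 * fps_X - 3 * fps_X ^ 2)"

definition gf_A005773 :: "real fps" where
  "gf_A005773 = (1 - 3 * fps_X - sqrt_series) / (6 * fps_X - 2)"

end

theory Submission
  imports Defs
begin

(* Drop the initial U: for n = m + 1 the paths are the DUD-avoiding words with m letters U and
   m + 1 letters D.  Splitting off the first letter, and remembering whether the word follows
   a D or a DU, gives linear equations for the generating functions A_d(x) (x counting the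
   letters U, d the letters D), solved by (1 - x)^(d+2) A_(d+1) = (1 - x + x^2)^d.  Hence the
   count is sum_i C(m,i) C(m+1-i,i+1), which is also the coefficient of x^(m+1) in
   (1 + x)(1 + x + x^2)^m, a sum of two trinomial coefficients.  Comparing coefficients in
   P (P^m)' = m P' P^m for P = 1 + x + x^2 yields a three-term recurrence for this sum.  On the
   other side g = gf_A005773 satisfies (1 - 3z)(1 + 2g)^2 = 1 + z; differentiating gives
   (1 - 2z - 3z^2) g' = 1 + 2g, i.e. the same recurrence, with the same initial values. *)

unbundle fps_syntax

lemma ex_nat_0_or_Suc: "(\<exists>i::nat. P i) \<longleftrightarrow> P 0 \<or> (\<exists>i. P (Suc i))"
  by (metis not0_implies_Suc)

lemma one_minus_X_mult_eq:
  fixes f g :: "'a :: comm_ring_1 fps"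
  assumes "f = fps_X * f + g"
  shows "(1 - fps_X) * f = g"
proof -
  have "(1 - fps_X) * f = f - fps_X * f"
    by (simp add: algebra_simps)
  then show ?thesis
    using assms by (metis add_diff_cancel_left')
qed

lemma fps_mult_left_cancel_nth_0:
  fixes c f g :: "'a :: idom fps"
  assumes "c $ 0 \<noteq> 0" and "c * f = c * g"
  shows "f = g"
  using assms by (metis fps_zero_nth mult_left_cancel)

lemma inverse_one_minus_X_power_nth:
  "(inverse (1 - fps_X :: 'a :: field_char_0 fps) ^ Suc r) $ k = of_nat ((r + k) choose k)"
proof -
  have "inverse (1 - fps_X :: 'a fps) ^ Suc r = inverse ((1 - fps_X) ^ Suc r)"
    by (rule fps_inverse_power[symmetric])
  also have "\<dots> = Abs_fps (\<lambda>k. of_nat ((r + k) choose k))"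
    using one_minus_const_fps_X_neg_power'[of "Suc r" "1 :: 'a"] by (simp del: power_Suc)
  finally show ?thesis
    by simp
qed

lemma one_plus_X_power_nth: "((1 + fps_X :: 'a :: field_char_0 fps) ^ n) $ k = of_nat (n choose k)"
  by (simp add: fps_binomial_of_nat[symmetric] binomial_gbinomial)

lemma second_order_recurrence_unique:
  fixes a b :: "nat \<Rightarrow> 'a :: idom"
  assumes "\<And>n. p n \<noteq> 0"
    and "\<And>n. p n * a (n + 2) = q n * a (n + 1) + r n * a n"
    and "\<And>n. p n * b (n + 2) = q n * b (n + 1) + r n * b n"
    and "a 0 = b 0" and "a 1 = b 1"
  shows "a n = b n"
proof -
  have "a n = b n \<and> a (n + 1) = b (n + 1)"
  proof (induction n)
    case (Suc n)
    then have "p n * a (n + 2) = p n * b (n + 2)"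
      using assms(2,3)[of n] by simp
    then show ?case
      using Suc assms(1)[of n] by simp
  qed (use assms(4,5) in simp)
  then show ?thesis ..
qed

lemma avoids_DUD_Nil: "avoids_DUD []"
  by (simp add: avoids_DUD_def)

lemma avoids_DUD_Cons:
  "avoids_DUD (x # w) \<longleftrightarrow> avoids_DUD w \<and> \<not> (x = D \<and> (\<exists>v. w = U # D # v))"
proof -
  have "(2 < length (x # w) \<and> x = D \<and> w ! 0 = U \<and> w ! 1 = D) \<longleftrightarrow> x = D \<and> (\<exists>v. w = U # D # v)"
    by (cases w; cases "tl w") auto
  then show ?thesis
    unfolding avoids_DUD_def ex_nat_0_or_Suc[where P = "\<lambda>i. i + 2 < length (x # w) \<and> _ i"] by auto
qed

definition avoiding_words :: "nat \<Rightarrow> nat \<Rightarrow> step list set" where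
  "avoiding_words u d =
     {w. length (filter (\<lambda>s. s = U) w) = u \<and> length (filter (\<lambda>s. s = D) w) = d \<and> avoids_DUD w}"

definition avoiding_words_after_D :: "nat \<Rightarrow> nat \<Rightarrow> step list set" where
  "avoiding_words_after_D u d = {w \<in> avoiding_words u d. \<nexists>v. w = U # D # v}"

definition avoiding_words_after_DU :: "nat \<Rightarrow> nat \<Rightarrow> step list set" where
  "avoiding_words_after_DU u d = {w \<in> avoiding_words u d. \<nexists>v. w = D # v}"

lemma UNIV_step: "UNIV = {U, D}"
  using step.exhaust by auto

lemma length_eq_count_U_plus_count_D:
  "length w = length (filter (\<lambda>s. s = U) w) + length (filter (\<lambda>s. s = D) w)"
proof -
  have "(\<lambda>s. s \<noteq> U) = (\<lambda>s. s = D)"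
    by (rule ext) (metis step.exhaust step.distinct(1))
  then show ?thesis
    using sum_length_filter_compl[of "\<lambda>s. s = U" w] by simp
qed

lemma finite_avoiding_words: "finite (avoiding_words u d)"
proof (rule finite_subset)
  show "avoiding_words u d \<subseteq> {w. set w \<subseteq> UNIV \<and> length w = u + d}"
  proof
    fix w assume "w \<in> avoiding_words u d"
    then show "w \<in> {w. set w \<subseteq> UNIV \<and> length w = u + d}"
      using length_eq_count_U_plus_count_D[of w] by (simp add: avoiding_words_def)
  qed
  show "finite {w :: step list. set w \<subseteq> UNIV \<and> length w = u + d}"
    by (rule finite_lists_length_eq) (simp add: UNIV_step)
qed

lemma card_step_lists_by_head:
  fixes S :: "step list set"
  assumes "finite S"
  shows "card S = card (S \<inter> {[]}) + card (Cons U -` S) + card (Cons D -` S)"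
proof -
  have split: "S = (S \<inter> {[]}) \<union> Cons U ` (Cons U -` S) \<union> Cons D ` (Cons D -` S)"
  proof (intro equalityI subsetI)
    fix w assume "w \<in> S"
    then show "w \<in> (S \<inter> {[]}) \<union> Cons U ` (Cons U -` S) \<union> Cons D ` (Cons D -` S)"
      by (cases w rule: list.exhaust; cases "hd w") auto
  qed auto
  have fin: "finite (Cons x -` S)" for x
    using assms by (rule finite_vimageI) simp
  have img: "card (Cons x ` T) = card T" for x and T :: "step list set"
    by (rule card_image) simp
  let ?E = "S \<inter> {[]}" and ?A = "Cons U ` (Cons U -` S)" and ?B = "Cons D ` (Cons D -` S)"
  have "card S = card (?E \<union> ?A \<union> ?B)"
    using split by (rule arg_cong)
  also have "\<dots> = card (?E \<union> ?A) + card ?B"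
    by (rule card_Un_disjoint) (use assms fin in auto)
  also have "card (?E \<union> ?A) = card ?E + card ?A"
    by (rule card_Un_disjoint) (use assms fin in auto)
  finally show ?thesis
    unfolding img .
qed

lemma finite_avoiding_words_after:
  "finite (avoiding_words_after_D u d)" "finite (avoiding_words_after_DU u d)"
  using finite_avoiding_words
  by (simp_all add: avoiding_words_after_D_def avoiding_words_after_DU_def)

lemma avoiding_words_Int_Nil:
  "avoiding_words u d \<inter> {[]} = (if u = 0 \<and> d = 0 then {[]} else {})"
  "avoiding_words_after_D u d \<inter> {[]} = (if u = 0 \<and> d = 0 then {[]} else {})"
  "avoiding_words_after_DU u d \<inter> {[]} = (if u = 0 \<and> d = 0 then {[]} else {})"
  by (auto simp: avoiding_words_after_D_def avoiding_words_after_DU_def avoiding_words_def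
      avoids_DUD_Nil)

lemma vimage_Cons_avoiding_words:
  "Cons U -` avoiding_words u d = (if u = 0 then {} else avoiding_words (u - 1) d)"
  "Cons D -` avoiding_words u d = (if d = 0 then {} else avoiding_words_after_D u (d - 1))"
  "Cons U -` avoiding_words_after_D u d = (if u = 0 then {} else avoiding_words_after_DU (u - 1) d)"
  "Cons D -` avoiding_words_after_D u d = (if d = 0 then {} else avoiding_words_after_D u (d - 1))"
  "Cons U -` avoiding_words_after_DU u d = (if u = 0 then {} else avoiding_words (u - 1) d)"
  "Cons D -` avoiding_words_after_DU u d = {}"
  by (auto simp: avoiding_words_after_D_def avoiding_words_after_DU_def avoiding_words_def
      avoids_DUD_Cons)

lemma grand_dyck_U_DUD_eq_Cons:
  "grand_dyck_U_DUD (Suc m) = Cons U ` avoiding_words m (Suc m)"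
  by (auto simp: grand_dyck_U_DUD_def avoiding_words_def avoids_DUD_Cons neq_Nil_conv)

definition gf_words :: "nat \<Rightarrow> real fps" where
  "gf_words d = Abs_fps (\<lambda>u. real (card (avoiding_words u d)))"

definition gf_words_after_D :: "nat \<Rightarrow> real fps" where
  "gf_words_after_D d = Abs_fps (\<lambda>u. real (card (avoiding_words_after_D u d)))"

definition gf_words_after_DU :: "nat \<Rightarrow> real fps" where
  "gf_words_after_DU d = Abs_fps (\<lambda>u. real (card (avoiding_words_after_DU u d)))"

lemma gf_words_rec:
  "gf_words 0 = 1 + fps_X * gf_words 0"
  "gf_words (Suc d) = fps_X * gf_words (Suc d) + gf_words_after_D d"
  "gf_words_after_D 0 = 1 + fps_X * gf_words_after_DU 0"
  "gf_words_after_D (Suc d) = fps_X * gf_words_after_DU (Suc d) + gf_words_after_D d"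
  "gf_words_after_DU 0 = 1 + fps_X * gf_words 0"
  "gf_words_after_DU (Suc d) = fps_X * gf_words (Suc d)"
  by (auto intro!: fps_ext simp: gf_words_def gf_words_after_D_def gf_words_after_DU_def
      card_step_lists_by_head[OF finite_avoiding_words]
      card_step_lists_by_head[OF finite_avoiding_words_after(1)]
      card_step_lists_by_head[OF finite_avoiding_words_after(2)]
      avoiding_words_Int_Nil vimage_Cons_avoiding_words)

lemma one_minus_X_mult_gf_words:
  "(1 - fps_X) * gf_words 0 = 1"
  "(1 - fps_X) * gf_words (Suc d) = gf_words_after_D d"
  using gf_words_rec(1,2)
  by (simp_all add: one_minus_X_mult_eq add.commute)

lemma gf_words_after_D_eq:
  "gf_words_after_D 0 = gf_words 0"
  "gf_words_after_D (Suc d) = (1 - fps_X + fps_X ^ 2) * gf_words (Suc d)"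
proof -
  have "gf_words_after_DU 0 = gf_words 0"
    by (metis gf_words_rec(1,5))
  then show "gf_words_after_D 0 = gf_words 0"
    by (metis gf_words_rec(1,3))
  show "gf_words_after_D (Suc d) = (1 - fps_X + fps_X ^ 2) * gf_words (Suc d)"
    using gf_words_rec(4,6)[of d] one_minus_X_mult_eq[OF gf_words_rec(2)[of d]]
    by (simp add: algebra_simps power2_eq_square)
qed

lemma gf_words_closed_form:
  "(1 - fps_X) ^ (d + 2) * gf_words (Suc d) = (1 - fps_X + fps_X ^ 2) ^ d"
proof (induction d)
  case 0
  show ?case
    using one_minus_X_mult_gf_words(1) one_minus_X_mult_gf_words(2)[of 0] gf_words_after_D_eq(1)
    by (simp add: power2_eq_square mult.assoc)
next
  case (Suc d)
  have "(1 - fps_X) ^ (Suc d + 2) * gf_words (Suc (Suc d))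
      = (1 - fps_X) ^ (d + 2) * ((1 - fps_X) * gf_words (Suc (Suc d)))"
    by (simp add: mult_ac)
  also have "\<dots> = (1 - fps_X + fps_X ^ 2) * ((1 - fps_X) ^ (d + 2) * gf_words (Suc d))"
    by (simp add: one_minus_X_mult_gf_words(2) gf_words_after_D_eq(2) mult_ac)
  also have "\<dots> = (1 - fps_X + fps_X ^ 2) ^ Suc d"
    by (simp only: Suc.IH power_Suc)
  finally show ?case .
qed

lemma gf_words_expansion:
  "gf_words (Suc d) =
     (\<Sum>i\<le>d. of_nat (d choose i) * (fps_X ^ (2 * i) * inverse (1 - fps_X) ^ (i + 2)))"
proof -
  define Y :: "real fps" where "Y = inverse (1 - fps_X)"
  have Y: "Y * (1 - fps_X) = 1"
    unfolding Y_def by (rule inverse_mult_eq_1) simp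
  have "gf_words (Suc d) = (Y * (1 - fps_X)) ^ (d + 2) * gf_words (Suc d)"
    by (simp add: Y)
  also have "\<dots> = Y ^ (d + 2) * (1 - fps_X + fps_X ^ 2) ^ d"
    by (simp only: power_mult_distrib mult.assoc gf_words_closed_form)
  also have "\<dots> = (Y * (1 - fps_X + fps_X ^ 2)) ^ d * Y ^ 2"
    by (simp add: power_add power_mult_distrib power2_eq_square mult_ac)
  also have "Y * (1 - fps_X + fps_X ^ 2) = 1 + fps_X ^ 2 * Y"
    using Y by (simp add: algebra_simps)
  also have "(1 + fps_X ^ 2 * Y) ^ d * Y ^ 2 = (\<Sum>i\<le>d. of_nat (d choose i) * (fps_X ^ (2 * i) * Y ^ (i + 2)))"
  proof -
    have "(1 + fps_X ^ 2 * Y) ^ d = (\<Sum>i\<le>d. of_nat (d choose i) * (fps_X ^ 2 * Y) ^ i)"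
      using binomial_ring[of "fps_X ^ 2 * Y" 1 d] by (simp add: add.commute)
    moreover have "(fps_X ^ 2 * Y) ^ i * Y ^ 2 = fps_X ^ (2 * i) * Y ^ (i + 2)" for i
      by (simp only: power_mult_distrib power_mult power_add mult.assoc)
    ultimately show ?thesis
      by (simp add: sum_distrib_right mult.assoc)
  qed
  finally show ?thesis
    unfolding Y_def .
qed

lemma card_avoiding_words_diag:
  "real (card (avoiding_words m (Suc m))) =
     (\<Sum>i\<le>m. real (m choose i) * real ((m + 1 - i) choose (i + 1)))"
proof -
  have "real (card (avoiding_words m (Suc m))) = gf_words (Suc m) $ m"
    by (simp add: gf_words_def)
  also have "\<dots> = (\<Sum>i\<le>m. real (m choose i) * real ((m + 1 - i) choose (i + 1)))"
    unfolding gf_words_expansion fps_sum_nth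
  proof (intro sum.cong refl)
    fix i
    have "(fps_X ^ (2 * i) * inverse (1 - fps_X :: real fps) ^ Suc (Suc i)) $ m
        = real ((m + 1 - i) choose (i + 1))"
    proof (cases "m < 2 * i")
      case True
      then show ?thesis
        by (simp add: fps_X_power_mult_nth binomial_eq_0 del: power_Suc)
    next
      case False
      then have "Suc i + (m - 2 * i) = m + 1 - i" "(m + 1 - i) - (i + 1) = m - 2 * i"
        by simp_all
      then show ?thesis
        using False binomial_symmetric[of "i + 1" "m + 1 - i"]
        by (simp add: fps_X_power_mult_nth inverse_one_minus_X_power_nth del: power_Suc)
    qed
    then show "(of_nat (m choose i) * (fps_X ^ (2 * i) * inverse (1 - fps_X) ^ (i + 2))) $ m
        = real (m choose i) * real ((m + 1 - i) choose (i + 1))"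
      by (simp add: fps_of_nat[symmetric] del: power_Suc)
  qed
  finally show ?thesis .
qed

definition trinomial :: "nat \<Rightarrow> nat \<Rightarrow> real" where
  "trinomial m k = ((1 + fps_X + fps_X ^ 2) ^ m) $ k"

lemma trinomial_Suc:
  "trinomial (Suc m) (k + 2) = trinomial m (k + 2) + trinomial m (k + 1) + trinomial m k"
proof -
  have "(1 + fps_X + fps_X ^ 2 :: real fps) ^ Suc m
      = (1 + fps_X + fps_X ^ 2) ^ m + fps_X * (1 + fps_X + fps_X ^ 2) ^ m
        + fps_X ^ 2 * (1 + fps_X + fps_X ^ 2) ^ m"
    by (simp add: algebra_simps)
  then show ?thesis
    by (simp add: trinomial_def fps_X_power_mult_nth)
qed

lemma trinomial_deriv_rec:
  "real (k + 2) * trinomial m (k + 2) + real (k + 1) * trinomial m (k + 1) + real k * trinomial m k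
     = real m * (trinomial m (k + 1) + 2 * trinomial m k)"
proof -
  define P :: "real fps" where "P = 1 + fps_X + fps_X ^ 2"
  define G where "G = P ^ m"
  have "P * fps_deriv G = of_nat m * (1 + 2 * fps_X) * G"
  proof (cases m)
    case (Suc l)
    have "fps_deriv P = 1 + 2 * fps_X"
      by (simp add: P_def numeral_2_eq_2)
    then show ?thesis
      unfolding G_def Suc fps_deriv_power' by (simp add: algebra_simps)
  qed (simp add: G_def)
  then have "(fps_deriv G + fps_X * fps_deriv G + fps_X ^ 2 * fps_deriv G) $ (k + 1)
      = (fps_const (real m) * G + fps_const (2 * real m) * (fps_X * G)) $ (k + 1)"
    by (simp add: P_def fps_of_nat algebra_simps numeral_fps_const flip: fps_const_mult)
  then have "fps_deriv G $ (k + 1) + (fps_X * fps_deriv G) $ (k + 1) + (fps_X ^ 2 * fps_deriv G) $ (k + 1)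
      = real m * G $ (k + 1) + 2 * real m * (fps_X * G) $ (k + 1)"
    by (simp only: fps_add_nth fps_mult_left_const_nth)
  then show ?thesis
    unfolding trinomial_def P_def[symmetric] G_def[symmetric]
    by (cases k) (simp_all add: fps_X_power_mult_nth, simp_all add: algebra_simps)
qed

lemma trinomial_diag_Suc: "trinomial (Suc k) (Suc k) = trinomial k k + 2 * trinomial k (Suc k)"
proof (cases k)
  case (Suc l)
  have "real (l + 2) * trinomial (Suc l) (l + 2) = real (l + 2) * trinomial (Suc l) l"
    using trinomial_deriv_rec[of l "Suc l"] by (simp add: algebra_simps)
  then have "trinomial (Suc l) (l + 2) = trinomial (Suc l) l"
    by simp
  then show ?thesis
    using trinomial_Suc[of "Suc l" l] by (simp add: Suc)
qed (simp add: trinomial_def)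

lemma trinomial_superdiag_Suc:
  "real (k + 2) * trinomial (Suc k) (k + 2)
     = real (2 * k + 2) * trinomial k k + real (k + 1) * trinomial k (Suc k)"
  using trinomial_Suc[of k k] trinomial_deriv_rec[of k k] by (simp add: algebra_simps)

definition trinomial_pair :: "nat \<Rightarrow> real" where
  "trinomial_pair m = trinomial m m + trinomial m (Suc m)"

lemma trinomial_pair_0: "trinomial_pair 0 = 1"
  by (simp add: trinomial_pair_def trinomial_def)

lemma trinomial_pair_1: "trinomial_pair 1 = 2"
  by (simp add: trinomial_pair_def trinomial_def)

lemma trinomial_pair_rec:
  "real (k + 3) * trinomial_pair (k + 2)
     = 2 * real (k + 3) * trinomial_pair (k + 1) + 3 * real (k + 1) * trinomial_pair k"
proof -
  have diag: "trinomial (k + 2) (k + 2) = trinomial (k + 1) (k + 1) + 2 * trinomial (k + 1) (k + 2)"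
    using trinomial_diag_Suc[of "Suc k"] by simp
  have superdiag: "real (k + 3) * trinomial (k + 2) (k + 3)
      = real (2 * k + 4) * trinomial (k + 1) (k + 1) + real (k + 2) * trinomial (k + 1) (k + 2)"
    using trinomial_superdiag_Suc[of "Suc k"] by (simp add: eval_nat_numeral)
  have "real (k + 1) * trinomial (k + 1) (k + 1) + real (k + 2) * trinomial (k + 1) (k + 2)
      = 3 * real (k + 1) * trinomial_pair k"
    using trinomial_diag_Suc[of k] trinomial_superdiag_Suc[of k]
    by (simp add: trinomial_pair_def algebra_simps)
  then show ?thesis
    using diag superdiag by (simp add: trinomial_pair_def algebra_simps eval_nat_numeral)
qed

lemma trinomial_pair_binomial_sum:
  "trinomial_pair m = (\<Sum>i\<le>m. real (m choose i) * real ((m + 1 - i) choose (i + 1)))"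
proof -
  have "(1 + fps_X) * (1 + fps_X + fps_X ^ 2) ^ m = (1 + fps_X) * (fps_X * (1 + fps_X) + 1 :: real fps) ^ m"
    by (simp add: algebra_simps power2_eq_square)
  also have "\<dots> = (\<Sum>i\<le>m. of_nat (m choose i) * (fps_X ^ i * (1 + fps_X) ^ (i + 1)))"
    unfolding binomial_ring[of "fps_X * (1 + fps_X)" 1 m] sum_distrib_left
    by (intro sum.cong refl) (simp add: power_mult_distrib mult_ac)
  finally have expand: "(1 + fps_X) * (1 + fps_X + fps_X ^ 2) ^ m
      = (\<Sum>i\<le>m. of_nat (m choose i) * (fps_X ^ i * (1 + fps_X :: real fps) ^ (i + 1)))" .
  have "trinomial_pair m = ((1 + fps_X) * (1 + fps_X + fps_X ^ 2) ^ m) $ (m + 1)"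
    by (simp add: trinomial_pair_def trinomial_def algebra_simps)
  also have "\<dots> = (\<Sum>i\<le>m. real (m choose i) * real ((i + 1) choose (m + 1 - i)))"
    unfolding expand fps_sum_nth
    by (intro sum.cong refl) (simp add: fps_X_power_mult_nth one_plus_X_power_nth fps_of_nat[symmetric] del: power_Suc)
  also have "\<dots> = (\<Sum>i\<le>m. real (m choose (m - i)) * real ((m - i + 1) choose (m + 1 - (m - i))))"
    by (rule sum.reindex_bij_witness[where i="\<lambda>i. m - i" and j="\<lambda>i. m - i"]) auto
  also have "\<dots> = (\<Sum>i\<le>m. real (m choose i) * real ((m + 1 - i) choose (i + 1)))"
    by (intro sum.cong refl) (simp add: binomial_symmetric[symmetric] Suc_diff_le)
  finally show ?thesis .
qed

lemma sqrt_series_0: "sqrt_series $ 0 = 1"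
  by (simp add: sqrt_series_def)

lemma sqrt_series_square: "sqrt_series ^ 2 = 1 - 2 * fps_X - 3 * fps_X ^ 2"
  using power_radical[of "1 - 2 * fps_X - 3 * fps_X ^ 2 :: real fps" "\<lambda>k x. root k x" 1]
  by (simp add: sqrt_series_def numeral_2_eq_2)

lemma gf_A005773_times_denominator:
  "(6 * fps_X - 2) * gf_A005773 = 1 - 3 * fps_X - sqrt_series"
proof -
  have unit: "(6 * fps_X - 2 :: real fps) $ 0 \<noteq> 0"
    by simp
  have "(6 * fps_X - 2) * gf_A005773
      = (1 - 3 * fps_X - sqrt_series) * (inverse (6 * fps_X - 2) * (6 * fps_X - 2))"
    unfolding gf_A005773_def fps_divide_unit[OF unit] by (simp add: ac_simps)
  then show ?thesis
    using inverse_mult_eq_1[OF unit] by simp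
qed

lemma gf_A005773_0: "gf_A005773 $ 0 = 0"
  using arg_cong[OF gf_A005773_times_denominator, of "\<lambda>f. f $ 0"] by (simp add: sqrt_series_0)

lemma gf_A005773_ode:
  "(1 - 2 * fps_X - 3 * fps_X ^ 2) * fps_deriv gf_A005773 = 1 + 2 * gf_A005773"
proof -
  define R where "R = 1 + 2 * gf_A005773"
  have R_0: "R $ 0 \<noteq> 0"
    by (simp add: R_def gf_A005773_0)
  have sqrt_eq: "sqrt_series = (1 - 3 * fps_X) * R"
    using gf_A005773_times_denominator by (simp add: R_def algebra_simps)
  have "(1 - 3 * fps_X) * ((1 - 3 * fps_X) * R ^ 2) = sqrt_series ^ 2"
    unfolding sqrt_eq by (simp add: power2_eq_square algebra_simps)
  also have "\<dots> = (1 - 3 * fps_X) * (1 + fps_X)"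
    unfolding sqrt_series_square by (simp add: power2_eq_square algebra_simps)
  finally have quadratic: "(1 - 3 * fps_X) * R ^ 2 = 1 + fps_X"
    by (rule fps_mult_left_cancel_nth_0[rotated]) simp
  have "(1 - 3 * fps_X) * (2 * R * fps_deriv R) - 3 * R ^ 2 = fps_deriv ((1 - 3 * fps_X) * R ^ 2)"
    by (simp add: power2_eq_square algebra_simps)
  also have "\<dots> = 1"
    by (simp add: quadratic)
  finally have deriv: "(1 - 3 * fps_X) * (2 * R * fps_deriv R) = 1 + 3 * R ^ 2"
    by (simp only: diff_eq_eq)
  have "R * ((1 - 3 * fps_X) * (1 + fps_X) * (2 * fps_deriv R))
      = (1 + fps_X) * ((1 - 3 * fps_X) * (2 * R * fps_deriv R))"
    by (simp add: algebra_simps)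
  also have "\<dots> = (1 + fps_X) + 3 * ((1 + fps_X) * R ^ 2)"
    by (simp only: deriv) (simp add: algebra_simps)
  also have "\<dots> = (1 - 3 * fps_X) * R ^ 2 + 3 * ((1 + fps_X) * R ^ 2)"
    using quadratic by simp
  also have "\<dots> = R * (4 * R)"
    by (simp add: algebra_simps power2_eq_square)
  finally have "(1 - 3 * fps_X) * (1 + fps_X) * (2 * fps_deriv R) = 4 * R"
    by (rule fps_mult_left_cancel_nth_0[OF R_0])
  then have "4 * ((1 - 2 * fps_X - 3 * fps_X ^ 2) * fps_deriv gf_A005773) = 4 * (1 + 2 * gf_A005773)"
    by (simp add: R_def algebra_simps power2_eq_square)
  then show ?thesis
    by (rule fps_mult_left_cancel_nth_0[rotated]) simp
qed

lemma gf_A005773_1: "gf_A005773 $ 1 = 1"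
  using arg_cong[OF gf_A005773_ode, of "\<lambda>f. f $ 0"] by (simp add: gf_A005773_0)

lemma gf_A005773_rec:
  "real (n + 2) * gf_A005773 $ (n + 2)
     = 2 * real (n + 2) * gf_A005773 $ (n + 1) + 3 * real n * gf_A005773 $ n"
proof -
  define g where "g = gf_A005773"
  have "fps_deriv g - 2 * (fps_X * fps_deriv g) - 3 * (fps_X ^ 2 * fps_deriv g)
      = (1 - 2 * fps_X - 3 * fps_X ^ 2) * fps_deriv g"
    by (simp add: algebra_simps)
  also have "\<dots> = 1 + 2 * g"
    unfolding g_def by (rule gf_A005773_ode)
  finally have "(fps_deriv g - 2 * (fps_X * fps_deriv g) - 3 * (fps_X ^ 2 * fps_deriv g)) $ (n + 1)
      = (1 + 2 * g) $ (n + 1)"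
    by simp
  then have "real (n + 2) * g $ (n + 2) - 2 * (real (n + 1) * g $ (n + 1)) - 3 * (real n * g $ n)
      = 2 * g $ (n + 1)"
    by (cases n) (simp_all add: fps_X_power_mult_nth numeral_fps_const)
  then show ?thesis
    unfolding g_def by (simp add: algebra_simps)
qed

lemma trinomial_pair_eq_gf_A005773: "trinomial_pair m = gf_A005773 $ Suc m"
proof (rule second_order_recurrence_unique[where a = trinomial_pair
      and b = "\<lambda>k. gf_A005773 $ Suc k" and p = "\<lambda>k. real (k + 3)"
      and q = "\<lambda>k. 2 * real (k + 3)" and r = "\<lambda>k. 3 * real (k + 1)"])
  show "real (k + 3) * trinomial_pair (k + 2)
      = 2 * real (k + 3) * trinomial_pair (k + 1) + 3 * real (k + 1) * trinomial_pair k" for k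
    by (rule trinomial_pair_rec)
  show "real (k + 3) * gf_A005773 $ Suc (k + 2)
      = 2 * real (k + 3) * gf_A005773 $ Suc (k + 1) + 3 * real (k + 1) * gf_A005773 $ Suc k" for k
    using gf_A005773_rec[of "Suc k"] by (simp add: eval_nat_numeral)
  show "trinomial_pair 0 = gf_A005773 $ Suc 0"
    using gf_A005773_1 by (simp add: trinomial_pair_0)
  show "trinomial_pair 1 = gf_A005773 $ Suc 1"
    using gf_A005773_rec[of 0] gf_A005773_1 trinomial_pair_1 by (simp add: numeral_2_eq_2)
qed simp

theorem corollary1:
  fixes n :: nat
  assumes "n \<ge> 1"
  shows "real (card (grand_dyck_U_DUD n)) = fps_nth gf_A005773 n"
proof -
  obtain m where n: "n = Suc m"
    using assms by (cases n) auto
  have "real (card (grand_dyck_U_DUD n)) = real (card (avoiding_words m (Suc m)))"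
    unfolding n grand_dyck_U_DUD_eq_Cons by (simp add: card_image)
  also have "\<dots> = trinomial_pair m"
    by (simp add: card_avoiding_words_diag trinomial_pair_binomial_sum)
  also have "\<dots> = gf_A005773 $ n"
    unfolding n by (rule trinomial_pair_eq_gf_A005773)
  finally show ?thesis .
qed

end
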